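(* In the two-state model with $\delta(t)=\tfrac12e^{-t}+\tfrac12e^{-2t}$, $g_1(a)=-a^2$ and $g_2(b)=2-(1-b)^2$, the generator $Q^*\sim(5/12,7/12)$ is the unique weak equilibrium, and it is a strong equilibrium.
   Context: Two-state model: $S=\{1,2\}$, admissible rows unrestricted ($D_i=E_i$), so every admissible generator has the form $Q=\begin{pmatrix}-a&a\\ b&-b\end{pmatrix}$ with $a,b\ge0$, written $Q\sim(a,b)$. The payoff is $f(t,1,(-a,a))=\delta(t)g_1(a)$ and $f(t,2,(b,-b))=\delta(t)g_2(b)$. $X$ is a continuous-time Markov chain with generator $Q$; $F(i,Q)=\mathbb E_{i,Q}[\int_0^\infty f(t,X_t,Q_{X_t})dt]$. $Q\otimes_\varepsilon Q'$: generator $Q$ on $[0,\varepsilon]$, then $Q'$ on $(\varepsilon,\infty)$, with expected payoff $F(i,Q\otimes_\varepsilon Q')$. $Q^*$ is a weak equilibrium if $\liminf_{\varepsilon\downarrow0}\varepsilon^{-1}(F(i,Q^* )-F(i,Q\otimes_\varepsilon Q^* ))\ge0$ for all admissible $Q$ and $i\in S$; a strong equilibrium if for every $i,Q$ there is $\varepsilon>0$ with $F(i,Q^* )\ge F(i,Q\otimes_{\varepsilon'}Q^* )$ for all $0<\varepsilon'\le\varepsilon$. *)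

theory Defs
  imports "HOL-Analysis.Analysis"
begin

text \<open>Two-state model, states 1 and 2. A generator Q ~ (a,b) is represented by the pair (a,b):
  Q = [[-a, a], [b, -b]].\<close>

type_synonym gen = "real \<times> real"

definition admissible :: "gen \<Rightarrow> bool" where
  "admissible Q \<longleftrightarrow> fst Q \<ge> 0 \<and> snd Q \<ge> 0"

definition genQ :: "gen \<Rightarrow> nat \<Rightarrow> nat \<Rightarrow> real" where
  "genQ Q i j =
     (if i = 1 then (if j = 1 then - fst Q else if j = 2 then fst Q else 0)
      else if i = 2 then (if j = 1 then snd Q else if j = 2 then - snd Q else 0)
      else 0)"

fun gpow :: "gen \<Rightarrow> nat \<Rightarrow> nat \<Rightarrow> nat \<Rightarrow> real" where
  "gpow Q 0 i j = (if i = j then 1 else 0)"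
| "gpow Q (Suc n) i j = (\<Sum>k\<in>{1,2}. gpow Q n i k * genQ Q k j)"

definition trans :: "gen \<Rightarrow> real \<Rightarrow> nat \<Rightarrow> nat \<Rightarrow> real" where
  "trans Q t i j = (\<Sum>n. t ^ n / fact n * gpow Q n i j)"

definition pay :: "(real \<Rightarrow> real) \<Rightarrow> (real \<Rightarrow> real) \<Rightarrow> (real \<Rightarrow> real) \<Rightarrow> real \<Rightarrow> nat \<Rightarrow> gen \<Rightarrow> real" where
  "pay \<delta> g1 g2 t j Q = (if j = 1 then \<delta> t * g1 (fst Q) else \<delta> t * g2 (snd Q))"

text \<open>F(i,Q) = E_{i,Q}[ int_0^oo f(t,X_t,Q_{X_t}) dt ].\<close>
definition F :: "(real \<Rightarrow> real) \<Rightarrow> (real \<Rightarrow> real) \<Rightarrow> (real \<Rightarrow> real) \<Rightarrow> nat \<Rightarrow> gen \<Rightarrow> real" where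
  "F \<delta> g1 g2 i Q =
     set_lebesgue_integral lborel {0..}
       (\<lambda>t. \<Sum>j\<in>{1,2}. trans Q t i j * pay \<delta> g1 g2 t j Q)"

text \<open>F(i, Q \<otimes>_eps Q'): generator Q on [0,eps], then Q' on (eps,oo) (Markov property).\<close>
definition Fcat :: "(real \<Rightarrow> real) \<Rightarrow> (real \<Rightarrow> real) \<Rightarrow> (real \<Rightarrow> real) \<Rightarrow> nat \<Rightarrow> gen \<Rightarrow> real \<Rightarrow> gen \<Rightarrow> real" where
  "Fcat \<delta> g1 g2 i Q \<epsilon> Q' =
     set_lebesgue_integral lborel {0..\<epsilon>}
       (\<lambda>t. \<Sum>j\<in>{1,2}. trans Q t i j * pay \<delta> g1 g2 t j Q)
   + set_lebesgue_integral lborel {\<epsilon><..}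
       (\<lambda>t. \<Sum>k\<in>{1,2}. \<Sum>j\<in>{1,2}.
              trans Q \<epsilon> i k * trans Q' (t - \<epsilon>) k j * pay \<delta> g1 g2 t j Q')"

definition weak_eq :: "(real \<Rightarrow> real) \<Rightarrow> (real \<Rightarrow> real) \<Rightarrow> (real \<Rightarrow> real) \<Rightarrow> gen \<Rightarrow> bool" where
  "weak_eq \<delta> g1 g2 Qs \<longleftrightarrow> admissible Qs \<and>
     (\<forall>Q i. admissible Q \<and> i \<in> {1,2} \<longrightarrow>
        Liminf (at_right 0)
          (\<lambda>\<epsilon>. ereal ((F \<delta> g1 g2 i Qs - Fcat \<delta> g1 g2 i Q \<epsilon> Qs) / \<epsilon>)) \<ge> 0)"

definition strong_eq :: "(real \<Rightarrow> real) \<Rightarrow> (real \<Rightarrow> real) \<Rightarrow> (real \<Rightarrow> real) \<Rightarrow> gen \<Rightarrow> bool" where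
  "strong_eq \<delta> g1 g2 Qs \<longleftrightarrow> admissible Qs \<and>
     (\<forall>Q i. admissible Q \<and> i \<in> {1,2} \<longrightarrow>
        (\<exists>\<epsilon>>0. \<forall>\<epsilon>'. 0 < \<epsilon>' \<and> \<epsilon>' \<le> \<epsilon> \<longrightarrow>
           F \<delta> g1 g2 i Qs \<ge> Fcat \<delta> g1 g2 i Q \<epsilon>' Qs))"

end

theory Submission
  imports Defs
begin

(* For a generator Q = (a,b) with jump rate s = a + b we have Q^2 = -sQ, so the transition
   matrix is P(t) = I + Q (1 - e^(-st)) / s, and the discount mixes the modes e^(-t) and e^(-2t).
   Hence, writing Q' for the candidate (5/12, 7/12), the gap between F(i,Q') and the payoff of
   the deviation "Q on [0,e], then Q'" is an explicit exponential sum in e that vanishes at 0.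
   Its derivative at 0 is H(Q') - H(Q) for the Hamiltonian H(Q) = f(0,i,Q) + sum_k Q_ik F(k,Q'),
   so the weak equilibria are the generators whose rows maximise H.  For the quadratic rewards
   the maximisers are a = max 0 (D/2) and b = max 0 (1 - D/2), where D = F(2,Q') - F(1,Q') is
   in turn determined by a and b; this fixed-point equation forces D = 5/6, hence Q' is the
   only weak equilibrium.  The derivative of the gap is (a - 5/12)^2 in state 1 and
   (b - 7/12)^2 in state 2; when it vanishes for some Q other than Q', the second derivative,
   5/12 (b - 7/12)^2 resp. 7/12 (a - 5/12)^2, is positive, so the gap is nonnegative for all
   small e and Q' is a strong equilibrium. *)

lemma set_integral_eq_has_integral_nonneg:
  fixes f :: "real \<Rightarrow> real"
  assumes S: "S \<in> sets lborel" and f: "f \<in> borel_measurable borel"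
    and nonneg: "\<And>x. x \<in> S \<Longrightarrow> 0 \<le> f x" and I: "(f has_integral J) S"
  shows "set_integrable lborel S f" "(LINT x:S|lborel. f x) = J"
proof -
  have "f absolutely_integrable_on S"
    using I nonneg by (intro nonnegative_absolutely_integrable_1) (auto simp: has_integral_integrable)
  moreover have "(\<lambda>x. indicator S x *\<^sub>R f x) \<in> borel_measurable lborel"
    using S f by (intro borel_measurable_scaleR borel_measurable_indicator) auto
  ultimately show int: "set_integrable lborel S f"
    unfolding set_integrable_def by (simp add: integrable_completion)
  show "(LINT x:S|lborel. f x) = J"
    using set_borel_integral_eq_integral(2)[OF int] I by (simp add: integral_unique)
qed

lemma exp_neg_has_integral_atLeast:
  "(d::real) > 0 \<Longrightarrow> ((\<lambda>t. exp (- (d * t))) has_integral exp (- (d * u)) / d) {u..}"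
  using has_integral_exp_minus_to_infinity[of d u] by simp

lemma exp_neg_has_integral_greaterThan:
  assumes "(d::real) > 0"
  shows "((\<lambda>t. exp (- (d * t))) has_integral exp (- (d * u)) / d) {u<..}"
proof -
  have "(f has_integral y) {u..} \<longleftrightarrow> (f has_integral y) {u<..}" for f :: "real \<Rightarrow> real" and y
    using has_integral_closure[of "{u<..}" f y] by simp
  then show ?thesis
    using exp_neg_has_integral_atLeast[OF assms, of u] by blast
qed

lemma exp_neg_has_integral_atLeastAtMost:
  assumes "(d::real) > 0" "0 \<le> e"
  shows "((\<lambda>t. exp (- (d * t))) has_integral (1 - exp (- (d * e))) / d) {0..e}"
proof -
  have "((\<lambda>t. exp (- (d * t))) has_integral (- exp (- (d * e)) / d - - exp (- (d * 0)) / d)) {0..e}"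
    using assms
    by (intro fundamental_theorem_of_calculus)
       (auto intro!: derivative_eq_intros simp flip: has_real_derivative_iff_has_vector_derivative)
  then show ?thesis by (simp add: diff_divide_distrib)
qed

lemma exp_neg_mult_diff: "exp (- (r * (t - e))) = exp (r * e) * exp (- (r * t :: real))"
  by (simp add: mult_exp_exp right_diff_distrib')

lemma tendsto_quotient_at_right_0:
  assumes "(f has_real_derivative L) (at 0)" "f 0 = 0"
  shows "((\<lambda>x. f x / x) \<longlongrightarrow> L) (at_right 0)"
proof -
  have "((\<lambda>x. f x / x) \<longlongrightarrow> L) (at 0)"
    using assms by (simp add: has_field_derivative_iff)
  then show ?thesis
    by (rule tendsto_mono[OF at_le, rotated]) simp
qed

lemma eventually_nonneg_at_right_0_of_deriv_pos:
  assumes "(f has_real_derivative L) (at 0)" "f 0 = 0" "L > 0"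
  shows "eventually (\<lambda>x. 0 \<le> f x) (at_right 0)"
proof -
  have "eventually (\<lambda>x. f x / x > 0) (at_right 0)"
    using order_tendstoD(1)[OF tendsto_quotient_at_right_0[OF assms(1,2)] assms(3)] .
  with eventually_at_right_less[of 0] show ?thesis
    by eventually_elim (simp add: zero_less_divide_iff)
qed

lemma eventually_nonneg_at_right_0_of_second_deriv_pos:
  assumes f': "\<And>x. (f has_real_derivative f' x) (at x)" and f'': "(f' has_real_derivative L) (at 0)"
    and "f 0 = 0" "f' 0 = 0" "L > 0"
  shows "eventually (\<lambda>x. 0 \<le> f x) (at_right 0)"
proof -
  obtain b where "b > 0" and b: "\<And>y. 0 < y \<Longrightarrow> y < b \<Longrightarrow> 0 \<le> f' y"
    using eventually_nonneg_at_right_0_of_deriv_pos[OF f'' assms(4,5)]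
    unfolding eventually_at_right_field by auto
  have "0 \<le> f x" if "0 < x" "x < b" for x
  proof -
    obtain z where "0 < z" "z < x" "f x - f 0 = (x - 0) * f' z"
      using MVT2[OF \<open>0 < x\<close>, of f f'] f' by blast
    then show ?thesis
      using b[of z] that \<open>f 0 = 0\<close> by simp
  qed
  then show ?thesis
    unfolding eventually_at_right_field using \<open>b > 0\<close> by auto
qed

lemma nonneg_argmax_quadratic:
  fixes p c :: real
  assumes "p \<ge> 0" and max: "\<And>x. x \<ge> 0 \<Longrightarrow> x * c - x\<^sup>2 \<le> p * c - p\<^sup>2"
  shows "p = max 0 (c / 2)"
proof (cases "c \<ge> 0")
  case True
  have "(p - c / 2)\<^sup>2 = (c / 2) * c - (c / 2)\<^sup>2 - (p * c - p\<^sup>2)"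
    by (simp add: power2_eq_square algebra_simps)
  then have "(p - c / 2)\<^sup>2 \<le> 0"
    using max[of "c / 2"] True by simp
  then show ?thesis
    using True by simp
next
  case False
  then have "p * c \<le> 0"
    using \<open>p \<ge> 0\<close> by (simp add: mult_nonneg_nonpos)
  moreover have "p\<^sup>2 \<le> p * c"
    using max[of 0] by simp
  ultimately have "p\<^sup>2 \<le> 0"
    by linarith
  then show ?thesis
    using False by simp
qed

definition exp_sum :: "(real \<times> real) list \<Rightarrow> real \<Rightarrow> real" where
  "exp_sum ps x = (\<Sum>(c, l)\<leftarrow>ps. c * exp (- (l * x)))"

definition exp_sum_deriv :: "(real \<times> real) list \<Rightarrow> (real \<times> real) list" where
  "exp_sum_deriv ps = map (\<lambda>(c, l). (- (l * c), l)) ps"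

lemma exp_sum_has_real_derivative:
  "(exp_sum ps has_real_derivative exp_sum (exp_sum_deriv ps) x) (at x)"
  by (induction ps) (auto simp: exp_sum_def exp_sum_deriv_def intro!: derivative_eq_intros)

lemma exp_sum_deriv_at_0: "exp_sum (exp_sum_deriv ps) 0 = - (\<Sum>(c, l)\<leftarrow>ps. l * c)"
  by (induction ps) (auto simp: exp_sum_def exp_sum_deriv_def)

lemma exp_sum_second_deriv_at_0:
  "exp_sum (exp_sum_deriv (exp_sum_deriv ps)) 0 = (\<Sum>(c, l)\<leftarrow>ps. l * (l * c))"
  by (induction ps) (auto simp: exp_sum_def exp_sum_deriv_def)

section \<open>Transition probabilities\<close>

definition jump_rate :: "gen \<Rightarrow> real" where
  "jump_rate Q = fst Q + snd Q"

lemma jump_rate_nonneg: "admissible Q \<Longrightarrow> jump_rate Q \<ge> 0"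
  by (simp add: admissible_def jump_rate_def)

lemma genQ_eq_0_if_jump_rate_0: "admissible Q \<Longrightarrow> jump_rate Q = 0 \<Longrightarrow> genQ Q i j = 0"
  by (cases Q) (auto simp: admissible_def jump_rate_def genQ_def)

lemma genQ_square:
  assumes "i \<in> {1,2}" "j \<in> {1,2}"
  shows "(\<Sum>k\<in>{1,2}. genQ Q i k * genQ Q k j) = - jump_rate Q * genQ Q i j"
  using assms by (auto simp: genQ_def jump_rate_def algebra_simps)

lemma genQ_square_mult:
  assumes "i \<in> {1,2}"
  shows "(\<Sum>k\<in>{1,2}. genQ Q i k * (\<Sum>j\<in>{1,2}. genQ Q k j * v j))
    = - jump_rate Q * (\<Sum>j\<in>{1,2}. genQ Q i j * v j)"
  using assms by (auto simp: genQ_def jump_rate_def algebra_simps)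

lemma jump_rate_mult_genQ_sum_div:
  assumes "admissible Q"
  shows "jump_rate Q * ((\<Sum>k\<in>{1,2}. genQ Q i k * v k) / jump_rate Q) = (\<Sum>k\<in>{1,2}. genQ Q i k * v k)"
  using genQ_eq_0_if_jump_rate_0[OF assms] by (cases "jump_rate Q = 0") auto

lemma gpow_Suc_eq:
  assumes "i \<in> {1,2}" "j \<in> {1,2}"
  shows "gpow Q (Suc n) i j = (- jump_rate Q) ^ n * genQ Q i j"
  using assms(2)
proof (induction n arbitrary: j)
  case 0
  then show ?case by (auto simp: genQ_def)
next
  case (Suc n)
  have "gpow Q (Suc (Suc n)) i j = (\<Sum>k\<in>{1,2}. (- jump_rate Q) ^ n * (genQ Q i k * genQ Q k j))"
    using Suc.IH by (simp del: gpow.simps(2) add: gpow.simps(2)[of Q "Suc n"] mult.assoc)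
  also have "\<dots> = (- jump_rate Q) ^ n * (\<Sum>k\<in>{1,2}. genQ Q i k * genQ Q k j)"
    by (simp only: sum_distrib_left)
  also have "\<dots> = (- jump_rate Q) ^ Suc n * genQ Q i j"
    by (simp only: genQ_square[OF assms(1) Suc.prems]) simp
  finally show ?case .
qed

text \<open>For a rate-zero admissible generator both sides reduce to the identity matrix, using the
  convention \<open>x / 0 = 0\<close>.\<close>
lemma trans_eq:
  assumes "admissible Q" "i \<in> {1,2}" "j \<in> {1,2}"
  shows "trans Q t i j = of_bool (i = j) + genQ Q i j * ((1 - exp (- (jump_rate Q * t))) / jump_rate Q)"
proof -
  define s where "s = jump_rate Q"
  define c where "c = genQ Q i j / s"
  have term_eq: "t ^ n / fact n * gpow Q n i j =
      (if n = 0 then of_bool (i = j) else 0) - c * ((- s * t) ^ n / fact n - (if n = 0 then 1 else 0))"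
    for n
  proof (cases n)
    case (Suc m)
    have "genQ Q i j = s * c"
      using genQ_eq_0_if_jump_rate_0[OF assms(1)] by (cases "s = 0") (auto simp: s_def c_def)
    then have "t ^ n / fact n * gpow Q n i j = t ^ n / fact n * ((- s) ^ m * (s * c))"
      using Suc by (simp del: gpow.simps add: gpow_Suc_eq[OF assms(2,3)] s_def)
    also have "\<dots> = - c * ((- s) ^ n * t ^ n / fact n)"
      by (simp add: Suc)
    also have "\<dots> = - c * ((- s * t) ^ n / fact n)"
      by (simp only: power_mult_distrib)
    finally show ?thesis
      using Suc by simp
  qed simp
  have "(\<lambda>n. (- s * t) ^ n / fact n) sums exp (- s * t)"
    using exp_converges[of "- s * t"] by (simp add: divide_inverse mult.commute)
  then have "(\<lambda>n. (if n = 0 then of_bool (i = j) else 0) - c * ((- s * t) ^ n / fact n - (if n = 0 then 1 else 0)))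
      sums (of_bool (i = j) - c * (exp (- s * t) - 1))"
    by (intro sums_diff sums_mult sums_single[of 0 "\<lambda>_. of_bool (i = j)", simplified]
          sums_single[of 0 "\<lambda>_. 1::real", simplified])
  then have "trans Q t i j = of_bool (i = j) - c * (exp (- s * t) - 1)"
    unfolding trans_def term_eq by (simp add: sums_iff)
  then show ?thesis
    by (simp add: s_def c_def right_diff_distrib diff_divide_distrib)
qed

lemma trans_sum_eq:
  assumes "admissible Q" "i \<in> {1,2}"
  shows "(\<Sum>k\<in>{1,2}. trans Q t i k * v k)
    = v i + (\<Sum>k\<in>{1,2}. genQ Q i k * v k) * ((1 - exp (- (jump_rate Q * t))) / jump_rate Q)"
  using assms(2) by (auto simp: trans_eq[OF assms(1)] algebra_simps)

section \<open>Closed forms of the payoff functionals\<close>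

definition discount :: "real \<Rightarrow> real" where
  "discount t = exp (- t) / 2 + exp (- 2 * t) / 2"

lemma set_integral_discount_exp:
  assumes S: "S \<in> sets lborel" and c: "c \<ge> 0"
    and J: "\<And>d. d > 0 \<Longrightarrow> ((\<lambda>t. exp (- (d * t))) has_integral J d) S"
  shows "set_integrable lborel S (\<lambda>t. discount t * exp (- (c * t)))"
    "(LINT t:S|lborel. discount t * exp (- (c * t))) = (\<Sum>\<mu>\<in>{1,2}. J (\<mu> + c)) / 2"
proof -
  have split: "discount t * exp (- (c * t)) = exp (- ((1 + c) * t)) / 2 + exp (- ((2 + c) * t)) / 2"
    for t by (simp add: discount_def algebra_simps flip: exp_add)
  have "((\<lambda>t. discount t * exp (- (c * t))) has_integral (J (1 + c) / 2 + J (2 + c) / 2)) S"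
    unfolding split using c by (intro has_integral_add has_integral_divide J) auto
  moreover have "(\<lambda>t. discount t * exp (- (c * t))) \<in> borel_measurable borel"
    by (simp add: discount_def)
  ultimately show "set_integrable lborel S (\<lambda>t. discount t * exp (- (c * t)))"
    "(LINT t:S|lborel. discount t * exp (- (c * t))) = (\<Sum>\<mu>\<in>{1,2}. J (\<mu> + c)) / 2"
    using set_integral_eq_has_integral_nonneg[OF S] by (simp_all add: discount_def add.commute)
qed

lemma set_integral_discount_affine_exp:
  assumes S: "S \<in> sets lborel" and c: "c \<ge> 0"
    and J: "\<And>d. d > 0 \<Longrightarrow> ((\<lambda>t. exp (- (d * t))) has_integral J d) S"
  shows "(LINT t:S|lborel. discount t * (U - V * exp (- (c * t))))
    = (\<Sum>\<mu>\<in>{1,2}. U * J \<mu> - V * J (\<mu> + c)) / 2"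
proof -
  have I0: "set_integrable lborel S discount" "(LINT t:S|lborel. discount t) = (J 1 + J 2) / 2"
    using set_integral_discount_exp[OF S order_refl J] by simp_all
  note Ic = set_integral_discount_exp[OF S c J]
  have "(\<lambda>t. discount t * (U - V * exp (- (c * t))))
      = (\<lambda>t. U * discount t - V * (discount t * exp (- (c * t))))"
    by (simp add: algebra_simps)
  then show ?thesis
    using set_integral_diff(2)[OF set_integrable_mult_right[OF I0(1)] set_integrable_mult_right[OF Ic(1)]]
    by (simp add: I0(2) Ic(2) set_integral_mult_right) (simp add: algebra_simps)
qed

definition reward :: "(real \<Rightarrow> real) \<Rightarrow> (real \<Rightarrow> real) \<Rightarrow> gen \<Rightarrow> nat \<Rightarrow> real" where
  "reward g1 g2 Q j = (if j = 1 then g1 (fst Q) else g2 (snd Q))"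

definition reward_drift :: "(real \<Rightarrow> real) \<Rightarrow> (real \<Rightarrow> real) \<Rightarrow> gen \<Rightarrow> nat \<Rightarrow> real" where
  "reward_drift g1 g2 Q i = (\<Sum>k\<in>{1,2}. genQ Q i k * reward g1 g2 Q k)"

definition reward_rise :: "(real \<Rightarrow> real) \<Rightarrow> (real \<Rightarrow> real) \<Rightarrow> gen \<Rightarrow> nat \<Rightarrow> real" where
  "reward_rise g1 g2 Q i = reward_drift g1 g2 Q i / jump_rate Q"

definition reward_limit :: "(real \<Rightarrow> real) \<Rightarrow> (real \<Rightarrow> real) \<Rightarrow> gen \<Rightarrow> nat \<Rightarrow> real" where
  "reward_limit g1 g2 Q i = reward g1 g2 Q i + reward_rise g1 g2 Q i"

lemma genQ_sum_reward_rise: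
  assumes "admissible Q" "i \<in> {1,2}"
  shows "(\<Sum>k\<in>{1,2}. genQ Q i k * reward_rise g1 g2 Q k) = - reward_drift g1 g2 Q i"
proof -
  have "(\<Sum>k\<in>{1,2}. genQ Q i k * reward_drift g1 g2 Q k) = - jump_rate Q * reward_drift g1 g2 Q i"
    unfolding reward_drift_def by (rule genQ_square_mult[OF assms(2)])
  moreover have "(\<Sum>k\<in>{1,2}. genQ Q i k * reward_rise g1 g2 Q k)
      = (\<Sum>k\<in>{1,2}. genQ Q i k * reward_drift g1 g2 Q k) / jump_rate Q"
    by (simp add: reward_rise_def add_divide_distrib)
  ultimately show ?thesis
    using genQ_eq_0_if_jump_rate_0[OF assms(1)] by (cases "jump_rate Q = 0") (auto simp: reward_drift_def)
qed

lemma genQ_sum_reward_limit: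
  assumes "admissible Q" "i \<in> {1,2}"
  shows "(\<Sum>k\<in>{1,2}. genQ Q i k * reward_limit g1 g2 Q k) = 0"
  using genQ_sum_reward_rise[OF assms, of g1 g2]
  by (simp add: reward_limit_def reward_drift_def algebra_simps)

text \<open>The Laplace transform at \<open>\<mu>\<close> of the expected reward \<open>t \<mapsto> E\<^sub>k g(X\<^sub>t)\<close>; the discount
  is the mixture of the modes \<open>\<mu> = 1\<close> and \<open>\<mu> = 2\<close>.\<close>
definition mode_value :: "(real \<Rightarrow> real) \<Rightarrow> (real \<Rightarrow> real) \<Rightarrow> gen \<Rightarrow> real \<Rightarrow> nat \<Rightarrow> real" where
  "mode_value g1 g2 Q \<mu> k = reward_limit g1 g2 Q k / \<mu> - reward_rise g1 g2 Q k / (\<mu> + jump_rate Q)"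

lemma pay_eq: "pay \<delta> g1 g2 t j Q = \<delta> t * reward g1 g2 Q j"
  by (simp add: pay_def reward_def)

lemma expected_reward:
  assumes "admissible Q" "k \<in> {1,2}"
  shows "(\<Sum>j\<in>{1,2}. trans Q t k j * reward g1 g2 Q j)
    = reward_limit g1 g2 Q k - reward_rise g1 g2 Q k * exp (- (jump_rate Q * t))"
  unfolding trans_sum_eq[OF assms] reward_drift_def[symmetric]
  by (simp add: reward_limit_def reward_rise_def diff_divide_distrib right_diff_distrib)

lemma expected_pay:
  assumes "admissible Q" "k \<in> {1,2}"
  shows "(\<Sum>j\<in>{1,2}. trans Q u k j * pay \<delta> g1 g2 t j Q)
    = \<delta> t * (reward_limit g1 g2 Q k - reward_rise g1 g2 Q k * exp (- (jump_rate Q * u)))"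
proof -
  have "(\<Sum>j\<in>{1,2}. trans Q u k j * pay \<delta> g1 g2 t j Q) = \<delta> t * (\<Sum>j\<in>{1,2}. trans Q u k j * reward g1 g2 Q j)"
    by (simp add: pay_eq sum_distrib_left mult.left_commute distrib_left)
  then show ?thesis
    by (simp only: expected_reward[OF assms])
qed

lemma F_eq:
  assumes "admissible Q" "i \<in> {1,2}"
  shows "F discount g1 g2 i Q = (\<Sum>\<mu>\<in>{1,2}. mode_value g1 g2 Q \<mu> i) / 2"
proof -
  have J: "((\<lambda>t. exp (- (d * t))) has_integral 1 / d) {0..}" if "d > 0" for d :: real
    using exp_neg_has_integral_atLeast[OF that, of 0] by simp
  show ?thesis
    unfolding F_def expected_pay[OF assms]
    by (simp add: set_integral_discount_affine_exp[OF _ jump_rate_nonneg[OF assms(1)] J] mode_value_def)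
qed

lemma F_2_minus_F_1:
  assumes "admissible (p, q)"
  shows "F discount g1 g2 2 (p, q) - F discount g1 g2 1 (p, q)
    = (\<Sum>\<mu>\<in>{1,2}. 1 / (\<mu> + (p + q))) / 2 * (g2 q - g1 p)"
proof -
  have "F discount g1 g2 2 (p, q) - F discount g1 g2 1 (p, q)
    = (\<Sum>\<mu>\<in>{1,2}. mode_value g1 g2 (p, q) \<mu> 2 - mode_value g1 g2 (p, q) \<mu> 1) / 2"
    by (simp add: F_eq[OF assms] field_simps)
  also have "\<dots> = (\<Sum>\<mu>\<in>{1,2}. 1 / (\<mu> + (p + q))) / 2 * (g2 q - g1 p)"
  proof (cases "p + q = 0")
    case True
    then have "p = 0" "q = 0"
      using assms by (auto simp: admissible_def)
    then show ?thesis
      by (simp add: mode_value_def reward_limit_def reward_rise_def reward_drift_def reward_def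
          genQ_def jump_rate_def field_simps)
  next
    case False
    define G where "G = g2 q - g1 p"
    have rise: "reward_rise g1 g2 (p, q) 1 = p * G / (p + q)"
      "reward_rise g1 g2 (p, q) 2 = - (q * G / (p + q))"
      by (simp_all add: G_def reward_rise_def reward_drift_def reward_def genQ_def jump_rate_def
          algebra_simps minus_divide_left)
    have "p * G / (p + q) + q * G / (p + q) = G"
      using False by (simp add: add_divide_distrib[symmetric] distrib_right[symmetric])
    then have "reward_limit g1 g2 (p, q) 2 = reward_limit g1 g2 (p, q) 1"
      "reward_rise g1 g2 (p, q) 1 - reward_rise g1 g2 (p, q) 2 = g2 q - g1 p"
      unfolding reward_limit_def rise by (simp_all add: reward_def G_def)
    then have "mode_value g1 g2 (p, q) \<mu> 2 - mode_value g1 g2 (p, q) \<mu> 1 = (g2 q - g1 p) / (\<mu> + (p + q))"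
      for \<mu>
      by (simp add: mode_value_def jump_rate_def diff_divide_distrib[symmetric])
    then show ?thesis
      by (simp add: add_divide_distrib[symmetric] algebra_simps)
  qed
  finally show ?thesis .
qed

lemma discount_transform_bounds:
  fixes r :: real
  assumes "r \<ge> 0"
  shows "(\<Sum>\<mu>\<in>{1,2}. 1 / (\<mu> + r)) / 2 > 0" "(\<Sum>\<mu>\<in>{1,2}. 1 / (\<mu> + r)) / 2 * (1 + r) \<le> 1"
proof -
  show "(\<Sum>\<mu>\<in>{1,2}. 1 / (\<mu> + r)) / 2 > 0"
    using assms by (simp add: add_pos_pos)
  have "1 / (2 + r) \<le> 1 / (1 + r)"
    using assms by (intro divide_left_mono) auto
  then have "(\<Sum>\<mu>\<in>{1,2}. 1 / (\<mu> + r)) / 2 \<le> 1 / (1 + r)"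
    by simp
  then show "(\<Sum>\<mu>\<in>{1,2}. 1 / (\<mu> + r)) / 2 * (1 + r) \<le> 1"
    using assms by (simp add: field_simps)
qed

lemma expected_pay_after_switch:
  assumes "admissible Qs"
  shows "(\<Sum>k\<in>{1,2}. \<Sum>j\<in>{1,2}. P k * trans Qs (t - e) k j * pay \<delta> g1 g2 t j Qs)
    = \<delta> t * ((\<Sum>k\<in>{1,2}. P k * reward_limit g1 g2 Qs k)
      - (\<Sum>k\<in>{1,2}. P k * reward_rise g1 g2 Qs k) * exp (jump_rate Qs * e) * exp (- (jump_rate Qs * t)))"
proof -
  have "(\<Sum>k\<in>{1,2}. \<Sum>j\<in>{1,2}. P k * trans Qs (t - e) k j * pay \<delta> g1 g2 t j Qs)
    = (\<Sum>k\<in>{1,2}. P k * (\<Sum>j\<in>{1,2}. trans Qs (t - e) k j * pay \<delta> g1 g2 t j Qs))"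
    by (simp only: sum_distrib_left mult.assoc)
  also have "\<dots> = (\<Sum>k\<in>{1,2}. P k * (\<delta> t *
      (reward_limit g1 g2 Qs k - reward_rise g1 g2 Qs k * exp (- (jump_rate Qs * (t - e))))))"
  proof (intro sum.cong refl)
    fix k :: nat
    assume "k \<in> {1,2}"
    then show "P k * (\<Sum>j\<in>{1,2}. trans Qs (t - e) k j * pay \<delta> g1 g2 t j Qs)
      = P k * (\<delta> t * (reward_limit g1 g2 Qs k - reward_rise g1 g2 Qs k * exp (- (jump_rate Qs * (t - e)))))"
      by (simp only: expected_pay[OF assms])
  qed
  also have "\<dots> = \<delta> t * ((\<Sum>k\<in>{1,2}. P k * reward_limit g1 g2 Qs k)
      - (\<Sum>k\<in>{1,2}. P k * reward_rise g1 g2 Qs k) * exp (jump_rate Qs * e) * exp (- (jump_rate Qs * t)))"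
    unfolding exp_neg_mult_diff by (simp add: algebra_simps)
  finally show ?thesis .
qed

lemma Fcat_eq:
  assumes Q: "admissible Q" and Qs: "admissible Qs" and i: "i \<in> {1,2}" and e: "e > 0"
  shows "Fcat discount g1 g2 i Q e Qs = (\<Sum>\<mu>\<in>{1,2}.
      reward_limit g1 g2 Q i * (1 - exp (- (\<mu> * e))) / \<mu>
      - reward_rise g1 g2 Q i * (1 - exp (- ((\<mu> + jump_rate Q) * e))) / (\<mu> + jump_rate Q)
      + exp (- (\<mu> * e)) * (\<Sum>k\<in>{1,2}. trans Q e i k * mode_value g1 g2 Qs \<mu> k)) / 2"
proof -
  define r where "r = jump_rate Qs"
  define U where "U = (\<Sum>k\<in>{1,2}. trans Q e i k * reward_limit g1 g2 Qs k)"
  define B where "B = (\<Sum>k\<in>{1,2}. trans Q e i k * reward_rise g1 g2 Qs k)"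
  have J1: "((\<lambda>t. exp (- (d * t))) has_integral (1 - exp (- (d * e))) / d) {0..e}" if "d > 0" for d
    using exp_neg_has_integral_atLeastAtMost[OF that] e by simp
  have J2: "((\<lambda>t. exp (- (d * t))) has_integral exp (- (d * e)) / d) {e<..}" if "d > 0" for d
    using exp_neg_has_integral_greaterThan[OF that] .
  have head: "(LINT t:{0..e}|lborel. discount t *
      (reward_limit g1 g2 Q i - reward_rise g1 g2 Q i * exp (- (jump_rate Q * t))))
    = (\<Sum>\<mu>\<in>{1,2}. reward_limit g1 g2 Q i * ((1 - exp (- (\<mu> * e))) / \<mu>)
      - reward_rise g1 g2 Q i * ((1 - exp (- ((\<mu> + jump_rate Q) * e))) / (\<mu> + jump_rate Q))) / 2"
    by (rule set_integral_discount_affine_exp[OF _ jump_rate_nonneg[OF Q] J1]) simp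
  have "(LINT t:{e<..}|lborel. discount t * (U - B * exp (r * e) * exp (- (r * t))))
    = (\<Sum>\<mu>\<in>{1,2}. U * (exp (- (\<mu> * e)) / \<mu>)
      - B * exp (r * e) * (exp (- ((\<mu> + r) * e)) / (\<mu> + r))) / 2"
    by (rule set_integral_discount_affine_exp[OF _ _ J2]) (simp_all add: r_def jump_rate_nonneg[OF Qs])
  also have "\<dots> = (\<Sum>\<mu>\<in>{1,2}. exp (- (\<mu> * e)) * (U / \<mu> - B / (\<mu> + r))) / 2"
  proof -
    have "exp (r * e) * exp (- ((\<mu> + r) * e)) = exp (- (\<mu> * e))" for \<mu>
      by (subst mult_exp_exp) (simp add: algebra_simps)
    then show ?thesis
      by (simp add: mult.assoc algebra_simps)
  qed
  finally have tail: "(LINT t:{e<..}|lborel. discount t * (U - B * exp (r * e) * exp (- (r * t))))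
    = (\<Sum>\<mu>\<in>{1,2}. exp (- (\<mu> * e)) * (\<Sum>k\<in>{1,2}. trans Q e i k * mode_value g1 g2 Qs \<mu> k)) / 2"
    by (simp add: U_def B_def r_def mode_value_def algebra_simps add_divide_distrib diff_divide_distrib)
  show ?thesis
    unfolding Fcat_def expected_pay[OF Q i] expected_pay_after_switch[OF Qs]
      U_def[symmetric] B_def[symmetric] r_def[symmetric] head tail
    by (simp add: algebra_simps add_divide_distrib diff_divide_distrib)
qed

section \<open>Local behaviour of the payoff gap\<close>

definition mode_drift :: "(real \<Rightarrow> real) \<Rightarrow> (real \<Rightarrow> real) \<Rightarrow> gen \<Rightarrow> gen \<Rightarrow> real \<Rightarrow> nat \<Rightarrow> real" where
  "mode_drift g1 g2 Q Qs \<mu> i = (\<Sum>k\<in>{1,2}. genQ Q i k * mode_value g1 g2 Qs \<mu> k)"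

definition gap_terms :: "(real \<Rightarrow> real) \<Rightarrow> (real \<Rightarrow> real) \<Rightarrow> nat \<Rightarrow> gen \<Rightarrow> gen \<Rightarrow> (real \<times> real) list" where
  "gap_terms g1 g2 i Q Qs =
     ((\<Sum>\<mu>\<in>{1,2}. mode_value g1 g2 Qs \<mu> i - mode_value g1 g2 Q \<mu> i) / 2, 0) #
     concat (map (\<lambda>\<mu>.
       [((reward_limit g1 g2 Q i / \<mu> - mode_value g1 g2 Qs \<mu> i
           - mode_drift g1 g2 Q Qs \<mu> i / jump_rate Q) / 2, \<mu>),
        ((mode_drift g1 g2 Q Qs \<mu> i / jump_rate Q
           - reward_rise g1 g2 Q i / (\<mu> + jump_rate Q)) / 2, \<mu> + jump_rate Q)]) [1, 2])"

lemma gap_eq_exp_sum: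
  assumes Q: "admissible Q" and Qs: "admissible Qs" and i: "i \<in> {1,2}" and e: "e > 0"
  shows "F discount g1 g2 i Qs - Fcat discount g1 g2 i Q e Qs = exp_sum (gap_terms g1 g2 i Q Qs) e"
proof -
  have split: "exp (- ((\<mu> + jump_rate Q) * e)) = exp (- (\<mu> * e)) * exp (- (jump_rate Q * e))" for \<mu>
    by (subst mult_exp_exp) (simp add: algebra_simps)
  show ?thesis
    unfolding F_eq[OF Qs i] Fcat_eq[OF Q Qs i e] trans_sum_eq[OF Q i] mode_drift_def[symmetric]
    by (simp add: exp_sum_def gap_terms_def split)
      (simp add: mode_value_def algebra_simps add_divide_distrib diff_divide_distrib)
qed

lemma gap_at_0: "exp_sum (gap_terms g1 g2 i Q Qs) 0 = 0"
  by (simp add: exp_sum_def gap_terms_def mode_value_def algebra_simps add_divide_distrib diff_divide_distrib)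

definition hamiltonian :: "(real \<Rightarrow> real) \<Rightarrow> (real \<Rightarrow> real) \<Rightarrow> (real \<Rightarrow> real) \<Rightarrow> gen \<Rightarrow> nat \<Rightarrow> gen \<Rightarrow> real" where
  "hamiltonian \<delta> g1 g2 Qs i Q = pay \<delta> g1 g2 0 i Q + (\<Sum>k\<in>{1,2}. genQ Q i k * F \<delta> g1 g2 k Qs)"

lemma hamiltonian_state_1:
  "hamiltonian \<delta> g1 g2 Qs 1 (a, b) = \<delta> 0 * g1 a + a * (F \<delta> g1 g2 2 Qs - F \<delta> g1 g2 1 Qs)"
  by (simp add: hamiltonian_def pay_def genQ_def algebra_simps)

lemma hamiltonian_state_2:
  "hamiltonian \<delta> g1 g2 Qs 2 (a, b) = \<delta> 0 * g2 b - b * (F \<delta> g1 g2 2 Qs - F \<delta> g1 g2 1 Qs)"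
  by (simp add: hamiltonian_def pay_def genQ_def algebra_simps)

lemma hamiltonian_discount_eq:
  assumes "admissible Qs"
  shows "hamiltonian discount g1 g2 Qs i Q = reward g1 g2 Q i + (\<Sum>\<mu>\<in>{1,2}. mode_drift g1 g2 Q Qs \<mu> i) / 2"
  by (simp add: hamiltonian_def pay_eq discount_def F_eq[OF assms] mode_drift_def algebra_simps
      add_divide_distrib)

lemma mode_drift_self:
  assumes "admissible Qs" "i \<in> {1,2}"
  shows "mode_drift g1 g2 Qs Qs \<mu> i = reward_drift g1 g2 Qs i / (\<mu> + jump_rate Qs)"
proof -
  have "mode_drift g1 g2 Qs Qs \<mu> i = (\<Sum>k\<in>{1,2}. genQ Qs i k * reward_limit g1 g2 Qs k) / \<mu>
      - (\<Sum>k\<in>{1,2}. genQ Qs i k * reward_rise g1 g2 Qs k) / (\<mu> + jump_rate Qs)"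
    by (simp add: mode_drift_def mode_value_def algebra_simps add_divide_distrib diff_divide_distrib)
  also have "\<dots> = reward_drift g1 g2 Qs i / (\<mu> + jump_rate Qs)"
    unfolding genQ_sum_reward_limit[OF assms] genQ_sum_reward_rise[OF assms] by simp
  finally show ?thesis .
qed

lemma hamiltonian_self:
  assumes Qs: "admissible Qs" and i: "i \<in> {1,2}"
  shows "hamiltonian discount g1 g2 Qs i Qs = (\<Sum>\<mu>\<in>{1,2}. \<mu> * mode_value g1 g2 Qs \<mu> i) / 2"
proof -
  have drift: "reward_drift g1 g2 Qs i = jump_rate Qs * reward_rise g1 g2 Qs i"
    using jump_rate_mult_genQ_sum_div[OF Qs] by (simp add: reward_rise_def reward_drift_def)
  have "\<mu> * mode_value g1 g2 Qs \<mu> i = reward g1 g2 Qs i + reward_drift g1 g2 Qs i / (\<mu> + jump_rate Qs)"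
    if "\<mu> > 0" for \<mu>
  proof -
    have "\<mu> + jump_rate Qs \<noteq> 0"
      using that jump_rate_nonneg[OF Qs] by simp
    have "\<mu> * mode_value g1 g2 Qs \<mu> i = reward g1 g2 Qs i + reward_rise g1 g2 Qs i
        - \<mu> * reward_rise g1 g2 Qs i / (\<mu> + jump_rate Qs)"
      using that by (simp add: mode_value_def reward_limit_def right_diff_distrib)
    also have "\<dots> = reward g1 g2 Qs i + jump_rate Qs * reward_rise g1 g2 Qs i / (\<mu> + jump_rate Qs)"
      using \<open>\<mu> + jump_rate Qs \<noteq> 0\<close> by (simp add: field_simps)
    finally show ?thesis
      by (simp add: drift)
  qed
  from this[of 1] this[of 2] show ?thesis
    by (simp add: hamiltonian_discount_eq[OF Qs] mode_drift_self[OF Qs i] add_divide_distrib)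
qed

lemma Fcat_self:
  assumes Qs: "admissible Qs" and i: "i \<in> {1,2}" and e: "e > 0"
  shows "Fcat discount g1 g2 i Qs e Qs = F discount g1 g2 i Qs"
proof -
  have "exp_sum (gap_terms g1 g2 i Qs Qs) e = 0"
    by (simp add: exp_sum_def gap_terms_def mode_drift_self[OF Qs i] mode_value_def reward_rise_def)
  then show ?thesis
    using gap_eq_exp_sum[OF Qs Qs i e, of g1 g2] by simp
qed

lemma gap_mode_moments:
  fixes \<mu> s A B W d :: real
  assumes "\<mu> > 0" "\<mu> + s > 0"
  shows "\<mu> * ((A / \<mu> - W - d) / 2) + (\<mu> + s) * ((d - B / (\<mu> + s)) / 2)
      = (A - B - \<mu> * W + s * d) / 2"
    and "\<mu> * (\<mu> * ((A / \<mu> - W - d) / 2)) + (\<mu> + s) * ((\<mu> + s) * ((d - B / (\<mu> + s)) / 2))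
      = (\<mu> * (A - B) - s * B - \<mu>\<^sup>2 * W + (2 * \<mu> + s) * (s * d)) / 2"
proof -
  have fast: "\<mu> * ((A / \<mu> - W - d) / 2) = (A - \<mu> * W - \<mu> * d) / 2"
    using assms(1) by (simp add: field_simps)
  have slow: "(\<mu> + s) * ((d - B / (\<mu> + s)) / 2) = ((\<mu> + s) * d - B) / 2"
    using assms(2) by (simp add: field_simps)
  show "\<mu> * ((A / \<mu> - W - d) / 2) + (\<mu> + s) * ((d - B / (\<mu> + s)) / 2)
      = (A - B - \<mu> * W + s * d) / 2"
    unfolding fast slow by (simp add: field_simps)
  show "\<mu> * (\<mu> * ((A / \<mu> - W - d) / 2)) + (\<mu> + s) * ((\<mu> + s) * ((d - B / (\<mu> + s)) / 2))
      = (\<mu> * (A - B) - s * B - \<mu>\<^sup>2 * W + (2 * \<mu> + s) * (s * d)) / 2"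
    unfolding fast slow by (simp add: field_simps power2_eq_square)
qed

lemma gap_deriv_at_0:
  assumes Q: "admissible Q" and Qs: "admissible Qs" and i: "i \<in> {1,2}"
  shows "exp_sum (exp_sum_deriv (gap_terms g1 g2 i Q Qs)) 0
    = hamiltonian discount g1 g2 Qs i Qs - hamiltonian discount g1 g2 Qs i Q"
proof -
  let ?s = "jump_rate Q" and ?A = "reward_limit g1 g2 Q i" and ?B = "reward_rise g1 g2 Q i"
  let ?W = "\<lambda>\<mu>. mode_value g1 g2 Qs \<mu> i" and ?D = "\<lambda>\<mu>. mode_drift g1 g2 Q Qs \<mu> i"
  have "exp_sum (exp_sum_deriv (gap_terms g1 g2 i Q Qs)) 0
    = - (\<Sum>\<mu>\<in>{1,2}. \<mu> * ((?A / \<mu> - ?W \<mu> - ?D \<mu> / ?s) / 2) + (\<mu> + ?s) * ((?D \<mu> / ?s - ?B / (\<mu> + ?s)) / 2))"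
    by (simp add: exp_sum_deriv_at_0 gap_terms_def algebra_simps)
  also have "\<dots> = - (\<Sum>\<mu>\<in>{1,2}. (?A - ?B - \<mu> * ?W \<mu> + ?D \<mu>) / 2)"
  proof (intro arg_cong[where f = uminus] sum.cong refl)
    fix \<mu> :: real
    assume "\<mu> \<in> {1,2}"
    then have pos: "\<mu> > 0" "\<mu> + ?s > 0"
      using jump_rate_nonneg[OF Q] by auto
    have cancel: "?s * (?D \<mu> / ?s) = ?D \<mu>"
      unfolding mode_drift_def by (rule jump_rate_mult_genQ_sum_div[OF Q])
    show "\<mu> * ((?A / \<mu> - ?W \<mu> - ?D \<mu> / ?s) / 2) + (\<mu> + ?s) * ((?D \<mu> / ?s - ?B / (\<mu> + ?s)) / 2)
      = (?A - ?B - \<mu> * ?W \<mu> + ?D \<mu>) / 2"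
      by (subst gap_mode_moments(1)[OF pos]) (simp only: cancel)
  qed
  also have "\<dots> = hamiltonian discount g1 g2 Qs i Qs - hamiltonian discount g1 g2 Qs i Q"
    unfolding hamiltonian_self[OF Qs i]
    by (simp add: hamiltonian_discount_eq[OF Qs] reward_limit_def algebra_simps add_divide_distrib
        diff_divide_distrib)
  finally show ?thesis .
qed

lemma gap_second_deriv_at_0:
  assumes Q: "admissible Q" and Qs: "admissible Qs" and i: "i \<in> {1,2}"
  shows "exp_sum (exp_sum_deriv (exp_sum_deriv (gap_terms g1 g2 i Q Qs))) 0
    = (\<Sum>\<mu>\<in>{1,2}. (\<mu> * reward g1 g2 Q i - reward_drift g1 g2 Q i - \<mu>\<^sup>2 * mode_value g1 g2 Qs \<mu> i
        + (2 * \<mu> + jump_rate Q) * mode_drift g1 g2 Q Qs \<mu> i) / 2)"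
proof -
  let ?s = "jump_rate Q" and ?A = "reward_limit g1 g2 Q i" and ?B = "reward_rise g1 g2 Q i"
  let ?W = "\<lambda>\<mu>. mode_value g1 g2 Qs \<mu> i" and ?D = "\<lambda>\<mu>. mode_drift g1 g2 Q Qs \<mu> i"
  have "exp_sum (exp_sum_deriv (exp_sum_deriv (gap_terms g1 g2 i Q Qs))) 0
    = (\<Sum>\<mu>\<in>{1,2}. \<mu> * (\<mu> * ((?A / \<mu> - ?W \<mu> - ?D \<mu> / ?s) / 2))
        + (\<mu> + ?s) * ((\<mu> + ?s) * ((?D \<mu> / ?s - ?B / (\<mu> + ?s)) / 2)))"
    by (simp add: exp_sum_second_deriv_at_0 gap_terms_def algebra_simps)
  also have "\<dots> = (\<Sum>\<mu>\<in>{1,2}. (\<mu> * reward g1 g2 Q i - reward_drift g1 g2 Q i - \<mu>\<^sup>2 * ?W \<mu>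
      + (2 * \<mu> + ?s) * ?D \<mu>) / 2)"
  proof (intro sum.cong refl)
    fix \<mu> :: real
    assume "\<mu> \<in> {1,2}"
    then have pos: "\<mu> > 0" "\<mu> + ?s > 0"
      using jump_rate_nonneg[OF Q] by auto
    have "?s * (?D \<mu> / ?s) = ?D \<mu>"
      unfolding mode_drift_def by (rule jump_rate_mult_genQ_sum_div[OF Q])
    moreover have "?s * ?B = reward_drift g1 g2 Q i"
      unfolding reward_rise_def reward_drift_def by (rule jump_rate_mult_genQ_sum_div[OF Q])
    ultimately show "\<mu> * (\<mu> * ((?A / \<mu> - ?W \<mu> - ?D \<mu> / ?s) / 2))
        + (\<mu> + ?s) * ((\<mu> + ?s) * ((?D \<mu> / ?s - ?B / (\<mu> + ?s)) / 2))
      = (\<mu> * reward g1 g2 Q i - reward_drift g1 g2 Q i - \<mu>\<^sup>2 * ?W \<mu> + (2 * \<mu> + ?s) * ?D \<mu>) / 2"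
      by (subst gap_mode_moments(2)[OF pos]) (simp add: reward_limit_def)
  qed
  finally show ?thesis .
qed

lemma liminf_gap_quotient:
  assumes Q: "admissible Q" and Qs: "admissible Qs" and i: "i \<in> {1,2}"
  shows "Liminf (at_right 0) (\<lambda>e. ereal ((F discount g1 g2 i Qs - Fcat discount g1 g2 i Q e Qs) / e))
    = ereal (hamiltonian discount g1 g2 Qs i Qs - hamiltonian discount g1 g2 Qs i Q)"
proof -
  have "((\<lambda>e. exp_sum (gap_terms g1 g2 i Q Qs) e / e)
      \<longlongrightarrow> hamiltonian discount g1 g2 Qs i Qs - hamiltonian discount g1 g2 Qs i Q) (at_right 0)"
    using tendsto_quotient_at_right_0[OF exp_sum_has_real_derivative gap_at_0[of g1 g2 i Q Qs]]
    by (simp add: gap_deriv_at_0[OF Q Qs i])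
  moreover have "eventually (\<lambda>e. exp_sum (gap_terms g1 g2 i Q Qs) e / e
      = (F discount g1 g2 i Qs - Fcat discount g1 g2 i Q e Qs) / e) (at_right 0)"
    using eventually_at_right_less[of 0] by eventually_elim (simp add: gap_eq_exp_sum[OF Q Qs i])
  ultimately have "((\<lambda>e. (F discount g1 g2 i Qs - Fcat discount g1 g2 i Q e Qs) / e)
      \<longlongrightarrow> hamiltonian discount g1 g2 Qs i Qs - hamiltonian discount g1 g2 Qs i Q) (at_right 0)"
    by (rule Lim_transform_eventually)
  then show ?thesis
    by (intro lim_imp_Liminf tendsto_ereal) simp_all
qed

lemma weak_eq_discount_iff:
  "weak_eq discount g1 g2 Qs \<longleftrightarrow> admissible Qs \<and>
    (\<forall>Q i. admissible Q \<and> i \<in> {1,2} \<longrightarrow>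
      hamiltonian discount g1 g2 Qs i Q \<le> hamiltonian discount g1 g2 Qs i Qs)"
  unfolding weak_eq_def by (auto simp: liminf_gap_quotient)

lemma eventually_gap_nonneg:
  assumes Q: "admissible Q" and Qs: "admissible Qs" and i: "i \<in> {1,2}"
    and deriv: "exp_sum (exp_sum_deriv (gap_terms g1 g2 i Q Qs)) 0 > 0
      \<or> exp_sum (exp_sum_deriv (gap_terms g1 g2 i Q Qs)) 0 = 0
        \<and> exp_sum (exp_sum_deriv (exp_sum_deriv (gap_terms g1 g2 i Q Qs))) 0 > 0"
  shows "eventually (\<lambda>e. Fcat discount g1 g2 i Q e Qs \<le> F discount g1 g2 i Qs) (at_right 0)"
proof -
  have "eventually (\<lambda>e. 0 \<le> exp_sum (gap_terms g1 g2 i Q Qs) e) (at_right 0)"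
    using deriv gap_at_0
      eventually_nonneg_at_right_0_of_deriv_pos[OF exp_sum_has_real_derivative]
      eventually_nonneg_at_right_0_of_second_deriv_pos[OF exp_sum_has_real_derivative
        exp_sum_has_real_derivative]
    by blast
  with eventually_at_right_less[of 0] show ?thesis
    by eventually_elim (simp add: gap_eq_exp_sum[OF Q Qs i, symmetric])
qed

lemma strong_eq_if_eventually_le:
  assumes "admissible Qs"
    and "\<And>Q i. admissible Q \<Longrightarrow> i \<in> {1,2} \<Longrightarrow>
      eventually (\<lambda>e. Fcat \<delta> g1 g2 i Q e Qs \<le> F \<delta> g1 g2 i Qs) (at_right 0)"
  shows "strong_eq \<delta> g1 g2 Qs"
  unfolding strong_eq_def
proof (intro conjI allI impI)
  fix Q and i :: nat
  assume "admissible Q \<and> i \<in> {1,2}"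
  then obtain b where "b > 0" and b: "\<And>e. 0 < e \<Longrightarrow> e < b \<Longrightarrow> Fcat \<delta> g1 g2 i Q e Qs \<le> F \<delta> g1 g2 i Qs"
    using assms(2) unfolding eventually_at_right_field by blast
  show "\<exists>\<epsilon>>0. \<forall>\<epsilon>'. 0 < \<epsilon>' \<and> \<epsilon>' \<le> \<epsilon> \<longrightarrow> Fcat \<delta> g1 g2 i Q \<epsilon>' Qs \<le> F \<delta> g1 g2 i Qs"
    using \<open>b > 0\<close> b by (intro exI[of _ "b / 2"]) auto
qed (rule assms(1))

section \<open>The quadratic example\<close>

text \<open>Read \<open>D\<close> as the value spread \<open>F(2,Q) - F(1,Q)\<close> of a weak equilibrium \<open>Q = (p, q)\<close>: the
  rows of \<open>Q\<close> are the best responses to \<open>D\<close>, while \<open>D\<close> is in turn computed from \<open>p\<close> and \<open>q\<close>.\<close>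
lemma value_spread_fixed_point:
  fixes D p q :: real
  assumes p: "p = max 0 (D / 2)" and q: "q = max 0 (1 - D / 2)"
    and D: "D = (\<Sum>\<mu>\<in>{1,2}. 1 / (\<mu> + (p + q))) / 2 * (2 - (1 - q)\<^sup>2 + p\<^sup>2)"
  shows "D = 5 / 6"
proof -
  define c where "c = (\<Sum>\<mu>\<in>{1,2}. 1 / (\<mu> + (p + q))) / 2"
  define E where "E = 2 - (1 - q)\<^sup>2 + p\<^sup>2"
  have "p + q \<ge> 0"
    using p q by auto
  note c_pos = discount_transform_bounds(1)[OF this, folded c_def]
    and c_le = discount_transform_bounds(2)[OF this, folded c_def]
  have DcE: "D = c * E"
    using D by (simp add: c_def E_def)
  consider "D < 0" | "D > 2" | "0 \<le> D" "D \<le> 2"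
    by linarith
  then show ?thesis
  proof cases
    case 1
    then have "p = 0" "q = 1 - D / 2"
      using p q by auto
    then have "q > 1" and D2: "D = 2 - 2 * q"
      using 1 by auto
    have "E < 0"
      using DcE c_pos 1 by (auto simp: mult_less_0_iff)
    then have "1 * E \<le> (c * (1 + q)) * E"
      using c_le \<open>p = 0\<close> by (intro mult_right_mono_neg) auto
    then have "E \<le> D * (1 + q)"
      by (simp add: DcE algebra_simps)
    moreover have "q * q > 1"
      using \<open>q > 1\<close> by (simp add: less_1_mult)
    ultimately show ?thesis
      using \<open>q > 1\<close> by (simp add: D2 E_def \<open>p = 0\<close> power2_eq_square algebra_simps)
  next
    case 2
    then have "q = 0" "p = D / 2"
      using p q by auto
    then have "p > 1" and D2: "D = 2 * p"
      using 2 by auto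
    have "E > 0"
      using \<open>q = 0\<close> by (simp add: E_def add_pos_nonneg)
    then have "(c * (1 + p)) * E \<le> 1 * E"
      using c_le \<open>q = 0\<close> by (intro mult_right_mono) auto
    then have "D * (1 + p) \<le> E"
      by (simp add: DcE algebra_simps)
    moreover have "p * p > 1"
      using \<open>p > 1\<close> by (simp add: less_1_mult)
    ultimately show ?thesis
      using \<open>p > 1\<close> by (simp add: D2 E_def \<open>q = 0\<close> power2_eq_square algebra_simps)
  next
    case 3
    then have "p = D / 2" "q = 1 - D / 2"
      using p q by auto
    then have "p + q = 1" "1 - q = p"
      by simp_all
    have "c = 5 / 12"
      unfolding c_def \<open>p + q = 1\<close> by simp
    moreover have "E = 2"
      unfolding E_def \<open>1 - q = p\<close> by simp
    ultimately show ?thesis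
      using DcE by simp
  qed
qed

definition example_g1 :: "real \<Rightarrow> real" where
  "example_g1 a = - (a ^ 2)"

definition example_g2 :: "real \<Rightarrow> real" where
  "example_g2 b = 2 - (1 - b) ^ 2"

lemma hamiltonian_example:
  "hamiltonian discount example_g1 example_g2 (5/12, 7/12) 1 (a, b) = 25/144 - (a - 5/12)\<^sup>2"
  "hamiltonian discount example_g1 example_g2 (5/12, 7/12) 2 (a, b) = 193/144 - (b - 7/12)\<^sup>2"
proof -
  have spread: "F discount example_g1 example_g2 2 (5/12, 7/12) - F discount example_g1 example_g2 1 (5/12, 7/12)
      = 5 / 6"
    by (subst F_2_minus_F_1) (simp_all add: admissible_def example_g1_def example_g2_def power2_eq_square)
  show "hamiltonian discount example_g1 example_g2 (5/12, 7/12) 1 (a, b) = 25/144 - (a - 5/12)\<^sup>2"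
    unfolding hamiltonian_state_1 spread
    by (simp add: discount_def example_g1_def power2_eq_square algebra_simps)
  show "hamiltonian discount example_g1 example_g2 (5/12, 7/12) 2 (a, b) = 193/144 - (b - 7/12)\<^sup>2"
    unfolding hamiltonian_state_2 spread
    by (simp add: discount_def example_g2_def power2_eq_square algebra_simps)
qed

lemma weak_eq_example: "weak_eq discount example_g1 example_g2 (5/12, 7/12)"
  unfolding weak_eq_discount_iff
proof (intro conjI allI impI)
  show "admissible (5/12, 7/12)"
    by (simp add: admissible_def)
  fix Q :: gen and i :: nat
  assume "admissible Q \<and> i \<in> {1,2}"
  then consider "i = 1" | "i = 2"
    by blast
  moreover obtain a b where "Q = (a, b)"
    by (cases Q)
  ultimately show "hamiltonian discount example_g1 example_g2 (5/12, 7/12) i Q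
    \<le> hamiltonian discount example_g1 example_g2 (5/12, 7/12) i (5/12, 7/12)"
    by cases (simp_all only: hamiltonian_example, simp_all)
qed

lemma weak_eq_example_unique:
  assumes "weak_eq discount example_g1 example_g2 Qs"
  shows "Qs = (5/12, 7/12)"
proof -
  obtain p q where Qs: "Qs = (p, q)"
    by (cases Qs)
  have adm: "admissible (p, q)" and
    max: "\<And>Q i. admissible Q \<Longrightarrow> i \<in> {1,2} \<Longrightarrow>
      hamiltonian discount example_g1 example_g2 (p, q) i Q
        \<le> hamiltonian discount example_g1 example_g2 (p, q) i (p, q)"
    using assms unfolding Qs weak_eq_discount_iff by auto
  define D where "D = F discount example_g1 example_g2 2 (p, q) - F discount example_g1 example_g2 1 (p, q)"
  have p: "p = max 0 (D / 2)"
  proof (rule nonneg_argmax_quadratic)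
    show "p \<ge> 0"
      using adm by (simp add: admissible_def)
    fix x :: real
    assume "x \<ge> 0"
    then have "hamiltonian discount example_g1 example_g2 (p, q) 1 (x, 0)
        \<le> hamiltonian discount example_g1 example_g2 (p, q) 1 (p, q)"
      by (intro max) (simp_all add: admissible_def)
    then show "x * D - x\<^sup>2 \<le> p * D - p\<^sup>2"
      unfolding hamiltonian_state_1 D_def[symmetric]
      by (simp add: discount_def example_g1_def algebra_simps)
  qed
  have "q = max 0 ((2 - D) / 2)"
  proof (rule nonneg_argmax_quadratic)
    show "q \<ge> 0"
      using adm by (simp add: admissible_def)
    fix y :: real
    assume "y \<ge> 0"
    then have "hamiltonian discount example_g1 example_g2 (p, q) 2 (0, y)
        \<le> hamiltonian discount example_g1 example_g2 (p, q) 2 (p, q)"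
      by (intro max) (simp_all add: admissible_def)
    then show "y * (2 - D) - y\<^sup>2 \<le> q * (2 - D) - q\<^sup>2"
      unfolding hamiltonian_state_2 D_def[symmetric]
      by (simp add: discount_def example_g2_def power2_eq_square algebra_simps)
  qed
  then have q: "q = max 0 (1 - D / 2)"
    by (simp add: diff_divide_distrib)
  have "D = (\<Sum>\<mu>\<in>{1,2}. 1 / (\<mu> + (p + q))) / 2 * (2 - (1 - q)\<^sup>2 + p\<^sup>2)"
    unfolding D_def F_2_minus_F_1[OF adm] by (simp add: example_g1_def example_g2_def)
  then have "D = 5 / 6"
    by (rule value_spread_fixed_point[OF p q])
  then show ?thesis
    using Qs p q by simp
qed

lemma gap_deriv_example:
  assumes "admissible (a, b)"
  shows "exp_sum (exp_sum_deriv (gap_terms example_g1 example_g2 1 (a, b) (5/12, 7/12))) 0 = (a - 5/12)\<^sup>2"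
    "exp_sum (exp_sum_deriv (gap_terms example_g1 example_g2 2 (a, b) (5/12, 7/12))) 0 = (b - 7/12)\<^sup>2"
proof -
  have Qs: "admissible (5/12, 7/12)" and i: "(1::nat) \<in> {1,2}" "(2::nat) \<in> {1,2}"
    by (simp_all add: admissible_def)
  show "exp_sum (exp_sum_deriv (gap_terms example_g1 example_g2 1 (a, b) (5/12, 7/12))) 0 = (a - 5/12)\<^sup>2"
    "exp_sum (exp_sum_deriv (gap_terms example_g1 example_g2 2 (a, b) (5/12, 7/12))) 0 = (b - 7/12)\<^sup>2"
    unfolding gap_deriv_at_0[OF assms Qs i(1)] gap_deriv_at_0[OF assms Qs i(2)] hamiltonian_example
    by simp_all
qed

lemma gap_second_deriv_example:
  assumes "admissible (a, b)"
  shows "exp_sum (exp_sum_deriv (exp_sum_deriv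
      (gap_terms example_g1 example_g2 1 (5/12, b) (5/12, 7/12)))) 0 = 5/12 * (b - 7/12)\<^sup>2"
    "exp_sum (exp_sum_deriv (exp_sum_deriv
      (gap_terms example_g1 example_g2 2 (a, 7/12) (5/12, 7/12)))) 0 = 7/12 * (a - 5/12)\<^sup>2"
  using assms
  by (simp_all add: gap_second_deriv_at_0 admissible_def mode_drift_def mode_value_def
      reward_limit_def reward_rise_def reward_drift_def reward_def genQ_def jump_rate_def
      example_g1_def example_g2_def power2_eq_square field_simps)

lemma gap_sign_condition_example:
  assumes adm: "admissible (a, b)" and ne: "(a, b) \<noteq> (5/12, 7/12)" and i: "i \<in> {1,2}"
  shows "exp_sum (exp_sum_deriv (gap_terms example_g1 example_g2 i (a, b) (5/12, 7/12))) 0 > 0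
    \<or> exp_sum (exp_sum_deriv (gap_terms example_g1 example_g2 i (a, b) (5/12, 7/12))) 0 = 0
      \<and> exp_sum (exp_sum_deriv (exp_sum_deriv
        (gap_terms example_g1 example_g2 i (a, b) (5/12, 7/12)))) 0 > 0"
proof -
  from i consider "i = 1" | "i = 2"
    by blast
  then show ?thesis
  proof cases
    case 1
    show ?thesis
    proof (cases "a = 5/12")
      case True
      with ne have "b \<noteq> 7/12"
        by simp
      then show ?thesis
        unfolding 1 True gap_deriv_example(1)[OF adm[unfolded True]]
          gap_second_deriv_example(1)[OF adm[unfolded True]] by simp
    next
      case False
      then show ?thesis
        unfolding 1 gap_deriv_example(1)[OF adm] by simp
    qed
  next
    case 2
    show ?thesis
    proof (cases "b = 7/12")
      case True
      with ne have "a \<noteq> 5/12"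
        by simp
      then show ?thesis
        unfolding 2 True gap_deriv_example(2)[OF adm[unfolded True]]
          gap_second_deriv_example(2)[OF adm[unfolded True]] by simp
    next
      case False
      then show ?thesis
        unfolding 2 gap_deriv_example(2)[OF adm] by simp
    qed
  qed
qed

lemma strong_eq_example: "strong_eq discount example_g1 example_g2 (5/12, 7/12)"
proof (rule strong_eq_if_eventually_le)
  show Qs: "admissible (5/12, 7/12)"
    by (simp add: admissible_def)
  fix Q and i :: nat
  assume Q: "admissible Q" and i: "i \<in> {1,2}"
  show "eventually (\<lambda>e. Fcat discount example_g1 example_g2 i Q e (5/12, 7/12)
      \<le> F discount example_g1 example_g2 i (5/12, 7/12)) (at_right 0)"
  proof (cases "Q = (5/12, 7/12)")
    case True
    show ?thesis
      using eventually_at_right_less[of 0] by eventually_elim (simp add: True Fcat_self[OF Qs i])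
  next
    case False
    obtain a b where ab: "Q = (a, b)"
      by (cases Q)
    note adm = Q[unfolded ab]
    show ?thesis
      unfolding ab
      by (rule eventually_gap_nonneg[OF adm Qs i gap_sign_condition_example[OF adm False[unfolded ab] i]])
  qed
qed

theorem mainTheorem12:
  fixes \<delta> g1 g2 :: "real \<Rightarrow> real"
  assumes "\<delta> = (\<lambda>t. exp (- t) / 2 + exp (- 2 * t) / 2)"
    and "g1 = (\<lambda>a. - (a ^ 2))"
    and "g2 = (\<lambda>b. 2 - (1 - b) ^ 2)"
  shows "weak_eq \<delta> g1 g2 (5/12, 7/12)
    \<and> (\<forall>Q. weak_eq \<delta> g1 g2 Q \<longrightarrow> Q = (5/12, 7/12))
    \<and> strong_eq \<delta> g1 g2 (5/12, 7/12)"
proof -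
  have "\<delta> = discount" "g1 = example_g1" "g2 = example_g2"
    using assms by (simp_all add: fun_eq_iff discount_def example_g1_def example_g2_def)
  then show ?thesis
    using weak_eq_example weak_eq_example_unique strong_eq_example by blast
qed

end
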